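(* If $A,B\in\mathcal T_{n,d}$ are block Toeplitz matrices with $A\intercal B$, then $\mathbf E_i(A)\intercal\mathbf E_j(B)$ for all $i,j\in\{0,\dots,n-1\}$.
   Context: $\mathcal T_{n,d}$ is the set of $n\times n$ block Toeplitz matrices $A=(A_{i-j})_{i,j=0}^{n-1}$ with entries $A_m\in\mathcal M_d(\mathbb C)$. For block Toeplitz $A,B$, write $A\intercal B$ if $AB$ is block Toeplitz. For $k=0,\dots,n-1$, $\mathbf E_k$ is the map on $n\times n$ block matrices such that the $(i,j)$ block entry of $\mathbf E_k(T)$ equals $T_{i,j}$ if $i-j=k$ or $i-j=k-n$, and $0$ otherwise. *)

theory Defs
  imports "HOL-Analysis.Analysis"
begin

text \<open>An n x n block matrix with d x d complex blocks is represented as a function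
  T :: nat => nat => complex^'d^'d; only the entries T i j with i, j < n matter.\<close>

type_synonym 'd bmat = "nat \<Rightarrow> nat \<Rightarrow> complex^'d^'d"

definition bmult :: "nat \<Rightarrow> 'd::finite bmat \<Rightarrow> 'd bmat \<Rightarrow> 'd bmat" where
  "bmult n A B = (\<lambda>i j. \<Sum>k<n. A i k ** B k j)"

definition block_toeplitz :: "nat \<Rightarrow> 'd::finite bmat \<Rightarrow> bool" where
  "block_toeplitz n T \<longleftrightarrow>
     (\<exists>a :: int \<Rightarrow> complex^'d^'d. \<forall>i<n. \<forall>j<n. T i j = a (int i - int j))"

definition toep_comm :: "nat \<Rightarrow> 'd::finite bmat \<Rightarrow> 'd bmat \<Rightarrow> bool" where
  "toep_comm n A B \<longleftrightarrow> block_toeplitz n A \<and> block_toeplitz n B \<and> block_toeplitz n (bmult n A B)"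

definition Ek :: "nat \<Rightarrow> nat \<Rightarrow> 'd::finite bmat \<Rightarrow> 'd bmat" where
  "Ek n k T = (\<lambda>i j. if i < n \<and> j < n \<and> (int i - int j = int k \<or> int i - int j = int k - int n)
                      then T i j else 0)"

end

theory Submission
  imports Defs
begin

text \<open>A block matrix is block Toeplitz iff it is invariant under the diagonal shift
  (i, j) \<mapsto> (i+1, j+1). Comparing the sums for (AB)_{i+1,j+1} and (AB)_{i,j} term by term,
  for block Toeplitz A and B the product AB is block Toeplitz iff the boundary identity
  A_{i+1,0} B_{0,j+1} = A_{i,n-1} B_{n-1,j} holds for all i, j < n-1. The blocks A_{i+1,0}
  and A_{i,n-1} lie on the same wrapped diagonal (i+1 \<equiv> i-(n-1) mod n), and likewise
  B_{0,j+1} and B_{n-1,j}; hence passing to E_k(A) and E_l(B) either leaves both sides of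
  the identity unchanged or makes both vanish.\<close>

definition shift_invariant :: "nat \<Rightarrow> 'd::finite bmat \<Rightarrow> bool" where
  "shift_invariant n T \<longleftrightarrow> (\<forall>i j. Suc i < n \<longrightarrow> Suc j < n \<longrightarrow> T (Suc i) (Suc j) = T i j)"

definition corner_identity :: "nat \<Rightarrow> 'd::finite bmat \<Rightarrow> 'd bmat \<Rightarrow> bool" where
  "corner_identity n A B \<longleftrightarrow>
     (\<forall>i j. Suc i < n \<longrightarrow> Suc j < n \<longrightarrow> A (Suc i) 0 ** B 0 (Suc j) = A i (n - 1) ** B (n - 1) j)"

lemma shift_invariant_diagonal:
  assumes "shift_invariant n T" and "i + k < n" and "j + k < n"
  shows "T (i + k) (j + k) = T i j"
  using assms(2,3)
proof (induction k)
  case (Suc k)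
  then have "T (i + Suc k) (j + Suc k) = T (i + k) (j + k)"
    using assms(1) unfolding shift_invariant_def by simp
  then show ?case using Suc by simp
qed simp

lemma block_toeplitz_iff_shift_invariant: "block_toeplitz n T \<longleftrightarrow> shift_invariant n T"
proof
  assume "block_toeplitz n T"
  then obtain a where "\<forall>i<n. \<forall>j<n. T i j = a (int i - int j)"
    unfolding block_toeplitz_def by blast
  then show "shift_invariant n T" unfolding shift_invariant_def by simp
next
  assume shift: "shift_invariant n T"
  define a where "a m = (if m \<ge> 0 then T (nat m) 0 else T 0 (nat (- m)))" for m :: int
  have "T i j = a (int i - int j)" if ij: "i < n" "j < n" for i j
  proof (cases "j \<le> i")
    case True
    then have "T i j = T (i - j) 0"
      using shift_invariant_diagonal[OF shift, of "i - j" j 0] ij by simp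
    then show ?thesis using True unfolding a_def by (simp add: nat_diff_distrib)
  next
    case False
    then have "T i j = T 0 (j - i)"
      using shift_invariant_diagonal[OF shift, of 0 i "j - i"] ij by simp
    then show ?thesis using False unfolding a_def by (simp add: nat_diff_distrib)
  qed
  then show "block_toeplitz n T" unfolding block_toeplitz_def by blast
qed

lemma bmult_Suc_Suc:
  assumes A: "shift_invariant n A" and B: "shift_invariant n B"
    and i: "Suc i < n" and j: "Suc j < n"
  shows "bmult n A B (Suc i) (Suc j) + A i (n - 1) ** B (n - 1) j
       = bmult n A B i j + A (Suc i) 0 ** B 0 (Suc j)"
proof -
  obtain m where n: "n = Suc m" using i by (cases n) auto
  have inner: "(\<Sum>k<m. A (Suc i) (Suc k) ** B (Suc k) (Suc j)) = (\<Sum>k<m. A i k ** B k j)"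
    using A B i j n unfolding shift_invariant_def by (intro sum.cong) auto
  have "bmult n A B (Suc i) (Suc j) = A (Suc i) 0 ** B 0 (Suc j) + (\<Sum>k<m. A i k ** B k j)"
    unfolding bmult_def n sum.lessThan_Suc_shift using inner by simp
  moreover have "bmult n A B i j = (\<Sum>k<m. A i k ** B k j) + A i m ** B m j"
    unfolding bmult_def n by simp
  ultimately show ?thesis using n by (simp add: algebra_simps)
qed

lemma shift_invariant_bmult_iff:
  assumes "shift_invariant n A" and "shift_invariant n B"
  shows "shift_invariant n (bmult n A B) \<longleftrightarrow> corner_identity n A B"
  using bmult_Suc_Suc[OF assms]
  unfolding shift_invariant_def corner_identity_def
  by (metis add_left_cancel add.commute)

lemma shift_invariant_Ek:
  assumes "shift_invariant n T"
  shows "shift_invariant n (Ek n k T)"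
  using assms unfolding shift_invariant_def Ek_def by auto

lemma corner_identity_Ek:
  assumes "corner_identity n A B" and k: "k < n" and l: "l < n"
  shows "corner_identity n (Ek n k A) (Ek n l B)"
  unfolding corner_identity_def
proof (intro allI impI)
  fix i j assume i: "Suc i < n" and j: "Suc j < n"
  show "Ek n k A (Suc i) 0 ** Ek n l B 0 (Suc j) = Ek n k A i (n - 1) ** Ek n l B (n - 1) j"
  proof (cases "Suc i = k \<and> Suc j = n - l")
    case True
    then have "Ek n k A (Suc i) 0 = A (Suc i) 0" "Ek n l B 0 (Suc j) = B 0 (Suc j)"
      "Ek n k A i (n - 1) = A i (n - 1)" "Ek n l B (n - 1) j = B (n - 1) j"
      using i j k l unfolding Ek_def by auto
    then show ?thesis using assms(1) i j unfolding corner_identity_def by simp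
  next
    case False
    then consider "Suc i \<noteq> k" | "Suc j \<noteq> n - l" by blast
    then show ?thesis
    proof cases
      case 1
      then have "Ek n k A (Suc i) 0 = 0" "Ek n k A i (n - 1) = 0"
        using i k unfolding Ek_def by auto
      then show ?thesis by simp
    next
      case 2
      then have "Ek n l B 0 (Suc j) = 0" "Ek n l B (n - 1) j = 0"
        using j l unfolding Ek_def by auto
      then show ?thesis by simp
    qed
  qed
qed

theorem lemma4p1:
  fixes A B :: "'d::finite bmat" and n :: nat
  assumes "toep_comm n A B"
  shows "\<forall>i<n. \<forall>j<n. toep_comm n (Ek n i A) (Ek n j B)"
proof (intro allI impI)
  fix k l assume k: "k < n" and l: "l < n"
  have A: "shift_invariant n A" and B: "shift_invariant n B"
    and "shift_invariant n (bmult n A B)"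
    using assms unfolding toep_comm_def block_toeplitz_iff_shift_invariant by auto
  then have "corner_identity n A B" using shift_invariant_bmult_iff by blast
  then have "corner_identity n (Ek n k A) (Ek n l B)" using corner_identity_Ek k l by blast
  moreover have "shift_invariant n (Ek n k A)" "shift_invariant n (Ek n l B)"
    using shift_invariant_Ek A B by auto
  ultimately show "toep_comm n (Ek n k A) (Ek n l B)"
    unfolding toep_comm_def block_toeplitz_iff_shift_invariant
    using shift_invariant_bmult_iff by blast
qed

end
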